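(* Let $D\subset\mathbb{C}$ be a closed disk centered at the origin. If $D$ is sufficiently small (i.e. its radius is sufficiently small), then $$R\Big[z^2, \frac{\overline z}{1+\overline z}; D\Big]=C(D).$$
   Context: For a closed disk $D\subset\mathbb{C}$, $C(D)$ is the algebra of complex-valued continuous functions on $D$ with the supremum norm. For continuous functions $f,g$ on $D$, $R[f,g;D]$ denotes the uniform closure on $D$ of the functions of the form $z\mapsto P(f(z),g(z))/Q(f(z),g(z))$, where $P,Q$ are polynomials in two complex variables and $Q(f(z),g(z))\neq 0$ for all $z\in D$ (i.e. rational functions in the variables $f$ and $g$ without poles on $\{(f(z),g(z)):z\in D\}$). Here $f(z)=z^2$ and $g(z)=\overline z/(1+\overline z)$. *)

theory Defs
  imports "HOL-Analysis.Analysis"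
begin

definition poly2 :: "(complex \<Rightarrow> complex \<Rightarrow> complex) set" where
  "poly2 = {(\<lambda>u v. \<Sum>i\<le>n. \<Sum>j\<le>n. c i j * u ^ i * v ^ j) | (c :: nat \<Rightarrow> nat \<Rightarrow> complex) n. True}"

definition rat_fun2 :: "(complex \<Rightarrow> complex) \<Rightarrow> (complex \<Rightarrow> complex) \<Rightarrow> complex set
    \<Rightarrow> (complex \<Rightarrow> complex) set" where
  "rat_fun2 f g D = {h. \<exists>P\<in>poly2. \<exists>Q\<in>poly2. (\<forall>z\<in>D. Q (f z) (g z) \<noteq> 0) \<and>
       (\<forall>z\<in>D. h z = P (f z) (g z) / Q (f z) (g z))}"

definition R_alg :: "(complex \<Rightarrow> complex) \<Rightarrow> (complex \<Rightarrow> complex) \<Rightarrow> complex set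
    \<Rightarrow> (complex \<Rightarrow> complex) set" where
  "R_alg f g D = {h. \<forall>e>0. \<exists>k\<in>rat_fun2 f g D. \<forall>z\<in>D. norm (h z - k z) < e}"

definition C_alg :: "complex set \<Rightarrow> (complex \<Rightarrow> complex) set" where
  "C_alg D = {h. continuous_on D h}"

end

(*
  R[f, g; D] is a uniformly closed algebra of continuous functions on D.  On a disk of radius
  at most 1/2 the pole of g lies outside D, so f = z^2 and cnj z = g / (1 - g) belong to it,
  hence so does |z|^4 = z^2 (cnj z)^2.  Multiplying z^2 cnj z = z |z|^2 by a polynomial in
  |z|^4 that approximates 1 / max(|z|^2, delta^2) recovers z up to an error of order delta,
  uniformly on D.  With z and cnj z every real polynomial in Re z and Im z lies in the
  algebra, and the Stone-Weierstrass theorem yields all of C(D).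
*)
theory Submission
  imports Defs
begin

lemma sum_atMost_if_le:
  fixes X :: "nat \<Rightarrow> 'a::comm_monoid_add"
  assumes "n \<le> N"
  shows "(\<Sum>i\<le>N. if i \<le> n then X i else 0) = (\<Sum>i\<le>n. X i)"
proof -
  have "{i \<in> {..N}. i \<le> n} = {..n}" using assms by auto
  then show ?thesis by (simp flip: sum.inter_filter)
qed

lemma poly2I: "(\<lambda>u v. \<Sum>i\<le>n. \<Sum>j\<le>n. c i j * u ^ i * v ^ j) \<in> poly2"
  unfolding poly2_def by blast

lemma poly2E:
  assumes "P \<in> poly2"
  obtains c n where "P = (\<lambda>u v. \<Sum>i\<le>n. \<Sum>j\<le>n. c i j * u ^ i * v ^ j)"
  using assms unfolding poly2_def by blast

lemma poly2_monomial: "(\<lambda>u v. a * u ^ p * v ^ q) \<in> poly2"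
proof -
  have "(\<lambda>u v. a * u ^ p * v ^ q) = (\<lambda>u v. \<Sum>i\<le>max p q. \<Sum>j\<le>max p q.
      (if j = q then if i = p then a else 0 else 0) * u ^ i * v ^ j)"
    by (simp add: fun_eq_iff if_distrib[of "\<lambda>x. x * _"] sum.delta cong: if_cong)
  then show ?thesis by (simp only: poly2I)
qed

lemma poly2_const: "(\<lambda>u v. a) \<in> poly2"
  using poly2_monomial[of a 0 0] by simp

lemma poly2_degree_pad:
  fixes c :: "nat \<Rightarrow> nat \<Rightarrow> complex"
  assumes "n \<le> N"
  shows "(\<Sum>i\<le>n. \<Sum>j\<le>n. c i j * u ^ i * v ^ j)
       = (\<Sum>i\<le>N. \<Sum>j\<le>N. (if i \<le> n \<and> j \<le> n then c i j else 0) * u ^ i * v ^ j)"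
proof -
  have "(\<Sum>i\<le>N. \<Sum>j\<le>N. (if i \<le> n \<and> j \<le> n then c i j else 0) * u ^ i * v ^ j)
      = (\<Sum>i\<le>N. if i \<le> n then \<Sum>j\<le>N. if j \<le> n then c i j * u ^ i * v ^ j else 0 else 0)"
    by (auto intro!: sum.cong)
  then show ?thesis using assms by (simp add: sum_atMost_if_le)
qed

lemma poly2_add:
  assumes "P \<in> poly2" "Q \<in> poly2"
  shows "(\<lambda>u v. P u v + Q u v) \<in> poly2"
proof -
  obtain c n where P: "P = (\<lambda>u v. \<Sum>i\<le>n. \<Sum>j\<le>n. c i j * u ^ i * v ^ j)"
    using assms(1) by (rule poly2E)
  obtain d m where Q: "Q = (\<lambda>u v. \<Sum>i\<le>m. \<Sum>j\<le>m. d i j * u ^ i * v ^ j)"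
    using assms(2) by (rule poly2E)
  have "(\<lambda>u v. P u v + Q u v) = (\<lambda>u v. \<Sum>i\<le>n + m. \<Sum>j\<le>n + m.
      ((if i \<le> n \<and> j \<le> n then c i j else 0) + (if i \<le> m \<and> j \<le> m then d i j else 0))
        * u ^ i * v ^ j)"
    unfolding P Q
    by (simp add: fun_eq_iff poly2_degree_pad[of n "n + m"] poly2_degree_pad[of m "n + m"]
        distrib_right sum.distrib)
  then show ?thesis by (simp only: poly2I)
qed

lemma poly2_sum:
  assumes "finite I" "\<And>i. i \<in> I \<Longrightarrow> F i \<in> poly2"
  shows "(\<lambda>u v. \<Sum>i\<in>I. F i u v) \<in> poly2"
  using assms by (induction I rule: finite_induct) (simp_all add: poly2_const poly2_add)

lemma poly2_mult:
  assumes "P \<in> poly2" "Q \<in> poly2"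
  shows "(\<lambda>u v. P u v * Q u v) \<in> poly2"
proof -
  obtain c n where P: "P = (\<lambda>u v. \<Sum>i\<le>n. \<Sum>j\<le>n. c i j * u ^ i * v ^ j)"
    using assms(1) by (rule poly2E)
  obtain d m where Q: "Q = (\<lambda>u v. \<Sum>i\<le>m. \<Sum>j\<le>m. d i j * u ^ i * v ^ j)"
    using assms(2) by (rule poly2E)
  have "(\<lambda>u v. P u v * Q u v) = (\<lambda>u v. \<Sum>i\<le>n. \<Sum>k\<le>m. \<Sum>j\<le>n. \<Sum>l\<le>m.
       (c i j * d k l) * u ^ (i + k) * v ^ (j + l))"
    unfolding P Q sum_product by (intro ext sum.cong refl) (simp add: power_add mult_ac)
  then show ?thesis by (simp add: poly2_sum poly2_monomial)
qed

lemma continuous_on_poly2: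
  assumes "P \<in> poly2" "continuous_on D f" "continuous_on D g"
  shows "continuous_on D (\<lambda>z. P (f z) (g z))"
proof -
  obtain c n where "P = (\<lambda>u v. \<Sum>i\<le>n. \<Sum>j\<le>n. c i j * u ^ i * v ^ j)"
    using assms(1) by (rule poly2E)
  then show ?thesis using assms(2,3) by (auto intro!: continuous_intros)
qed

lemma rat_fun2I:
  assumes "P \<in> poly2" "Q \<in> poly2" "\<And>z. z \<in> D \<Longrightarrow> Q (f z) (g z) \<noteq> 0"
    "\<And>z. z \<in> D \<Longrightarrow> k z = P (f z) (g z) / Q (f z) (g z)"
  shows "k \<in> rat_fun2 f g D"
  using assms unfolding rat_fun2_def by blast

lemma rat_fun2E:
  assumes "k \<in> rat_fun2 f g D"
  obtains P Q where "P \<in> poly2" "Q \<in> poly2" "\<And>z. z \<in> D \<Longrightarrow> Q (f z) (g z) \<noteq> 0"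
    "\<And>z. z \<in> D \<Longrightarrow> k z = P (f z) (g z) / Q (f z) (g z)"
  using assms unfolding rat_fun2_def by blast

lemma rat_fun2_const: "(\<lambda>z. a) \<in> rat_fun2 f g D"
  by (rule rat_fun2I[OF poly2_const[of a] poly2_const[of 1]]) simp_all

lemma rat_fun2_add:
  assumes "k1 \<in> rat_fun2 f g D" "k2 \<in> rat_fun2 f g D"
  shows "(\<lambda>z. k1 z + k2 z) \<in> rat_fun2 f g D"
proof -
  obtain P1 Q1 where 1: "P1 \<in> poly2" "Q1 \<in> poly2" "\<And>z. z \<in> D \<Longrightarrow> Q1 (f z) (g z) \<noteq> 0"
    "\<And>z. z \<in> D \<Longrightarrow> k1 z = P1 (f z) (g z) / Q1 (f z) (g z)"
    using assms(1) by (rule rat_fun2E) (rule that)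
  obtain P2 Q2 where 2: "P2 \<in> poly2" "Q2 \<in> poly2" "\<And>z. z \<in> D \<Longrightarrow> Q2 (f z) (g z) \<noteq> 0"
    "\<And>z. z \<in> D \<Longrightarrow> k2 z = P2 (f z) (g z) / Q2 (f z) (g z)"
    using assms(2) by (rule rat_fun2E) (rule that)
  show ?thesis
  proof (rule rat_fun2I)
    show "(\<lambda>u v. P1 u v * Q2 u v + P2 u v * Q1 u v) \<in> poly2" "(\<lambda>u v. Q1 u v * Q2 u v) \<in> poly2"
      using 1 2 by (simp_all add: poly2_add poly2_mult)
  qed (use 1 2 in \<open>simp_all add: add_frac_eq\<close>)
qed

lemma rat_fun2_mult:
  assumes "k1 \<in> rat_fun2 f g D" "k2 \<in> rat_fun2 f g D"
  shows "(\<lambda>z. k1 z * k2 z) \<in> rat_fun2 f g D"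
proof -
  obtain P1 Q1 where 1: "P1 \<in> poly2" "Q1 \<in> poly2" "\<And>z. z \<in> D \<Longrightarrow> Q1 (f z) (g z) \<noteq> 0"
    "\<And>z. z \<in> D \<Longrightarrow> k1 z = P1 (f z) (g z) / Q1 (f z) (g z)"
    using assms(1) by (rule rat_fun2E) (rule that)
  obtain P2 Q2 where 2: "P2 \<in> poly2" "Q2 \<in> poly2" "\<And>z. z \<in> D \<Longrightarrow> Q2 (f z) (g z) \<noteq> 0"
    "\<And>z. z \<in> D \<Longrightarrow> k2 z = P2 (f z) (g z) / Q2 (f z) (g z)"
    using assms(2) by (rule rat_fun2E) (rule that)
  show ?thesis
  proof (rule rat_fun2I)
    show "(\<lambda>u v. P1 u v * P2 u v) \<in> poly2" "(\<lambda>u v. Q1 u v * Q2 u v) \<in> poly2"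
      using 1 2 by (simp_all add: poly2_mult)
  qed (use 1 2 in simp_all)
qed

lemma continuous_on_rat_fun2:
  assumes "k \<in> rat_fun2 f g D" "continuous_on D f" "continuous_on D g"
  shows "continuous_on D k"
proof -
  obtain P Q where PQ: "P \<in> poly2" "Q \<in> poly2" "\<And>z. z \<in> D \<Longrightarrow> Q (f z) (g z) \<noteq> 0"
    "\<And>z. z \<in> D \<Longrightarrow> k z = P (f z) (g z) / Q (f z) (g z)"
    using assms(1) by (rule rat_fun2E) (rule that)
  have "continuous_on D (\<lambda>z. P (f z) (g z) / Q (f z) (g z))"
    using continuous_on_poly2[OF PQ(1) assms(2,3)] continuous_on_poly2[OF PQ(2) assms(2,3)] PQ(3)
    by (intro continuous_on_divide) auto
  then show ?thesis by (rule continuous_on_eq) (simp add: PQ(4))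
qed

lemma rat_fun2_subset_R_alg: "rat_fun2 f g D \<subseteq> R_alg f g D"
  unfolding R_alg_def by force

lemma R_alg_const: "(\<lambda>z. a) \<in> R_alg f g D"
  using rat_fun2_subset_R_alg rat_fun2_const by blast

lemma R_alg_uniformly_closed:
  assumes "\<And>e. e > 0 \<Longrightarrow> \<exists>F\<in>R_alg f g D. \<forall>z\<in>D. norm (h z - F z) < e"
  shows "h \<in> R_alg f g D"
  unfolding R_alg_def
proof (intro CollectI allI impI)
  fix e :: real assume "e > 0"
  then obtain F where F: "F \<in> R_alg f g D" "\<forall>z\<in>D. norm (h z - F z) < e / 2"
    using assms[of "e / 2"] by auto
  have "\<forall>e>0. \<exists>k\<in>rat_fun2 f g D. \<forall>z\<in>D. norm (F z - k z) < e"
    using F(1) unfolding R_alg_def by simp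
  then obtain k where "k \<in> rat_fun2 f g D" "\<forall>z\<in>D. norm (F z - k z) < e / 2"
    using \<open>e > 0\<close> half_gt_zero by blast
  with F(2) have "\<forall>z\<in>D. norm (h z - k z) < e / 2 + e / 2"
    using norm_diff_triangle_less by blast
  then show "\<exists>k\<in>rat_fun2 f g D. \<forall>z\<in>D. norm (h z - k z) < e"
    using \<open>k \<in> rat_fun2 f g D\<close> by auto
qed

lemma R_alg_iff_uniform_limit:
  "h \<in> R_alg f g D \<longleftrightarrow>
     (\<exists>k. (\<forall>n. k n \<in> rat_fun2 f g D) \<and> uniform_limit D k h sequentially)"
proof
  assume "h \<in> R_alg f g D"
  then have "\<forall>n. \<exists>k\<in>rat_fun2 f g D. \<forall>z\<in>D. norm (h z - k z) < 1 / Suc n"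
    unfolding R_alg_def by simp
  then have "\<exists>k. \<forall>n. k n \<in> rat_fun2 f g D \<and> (\<forall>z\<in>D. norm (h z - k n z) < 1 / Suc n)"
    unfolding Bex_def by (rule choice)
  then obtain k where k: "\<And>n. k n \<in> rat_fun2 f g D" "\<And>n z. z \<in> D \<Longrightarrow> norm (h z - k n z) < 1 / Suc n"
    by blast
  have "uniform_limit D k h sequentially"
  proof (rule uniform_limitI)
    fix e :: real assume "e > 0"
    then obtain N where N: "1 / Suc N < e"
      using nat_approx_posE by blast
    show "\<forall>\<^sub>F n in sequentially. \<forall>z\<in>D. dist (k n z) (h z) < e"
    proof (rule eventually_sequentiallyI[of N], intro ballI)
      fix n z assume "N \<le> n" "z \<in> D"
      have "1 / Suc n \<le> 1 / Suc N"
        using \<open>N \<le> n\<close> by (intro divide_left_mono) simp_all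
      then have "norm (h z - k n z) < 1 / Suc N"
        using k(2)[OF \<open>z \<in> D\<close>, of n] by linarith
      then show "dist (k n z) (h z) < e"
        using N by (simp add: dist_norm norm_minus_commute)
    qed
  qed
  then show "\<exists>k. (\<forall>n. k n \<in> rat_fun2 f g D) \<and> uniform_limit D k h sequentially"
    using k(1) by blast
next
  assume "\<exists>k. (\<forall>n. k n \<in> rat_fun2 f g D) \<and> uniform_limit D k h sequentially"
  then obtain k where k: "\<And>n. k n \<in> rat_fun2 f g D" "uniform_limit D k h sequentially"
    by blast
  show "h \<in> R_alg f g D"
    unfolding R_alg_def
  proof (intro CollectI allI impI)
    fix e :: real assume "e > 0"
    then obtain N where "\<forall>z\<in>D. dist (k N z) (h z) < e"
      using uniform_limitD[OF k(2)] unfolding eventually_sequentially by blast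
    then have "\<forall>z\<in>D. dist (h z) (k N z) < e"
      by (simp add: dist_commute)
    then show "\<exists>k\<in>rat_fun2 f g D. \<forall>z\<in>D. norm (h z - k z) < e"
      using k(1) by (auto simp: dist_norm)
  qed
qed

lemma continuous_on_R_alg:
  assumes "h \<in> R_alg f g D" "continuous_on D f" "continuous_on D g"
  shows "continuous_on D h"
proof -
  obtain k where k: "\<And>n. k n \<in> rat_fun2 f g D" "uniform_limit D k h sequentially"
    using assms(1) R_alg_iff_uniform_limit by blast
  have "\<forall>\<^sub>F n in sequentially. continuous_on D (k n)"
    using continuous_on_rat_fun2[OF k(1) assms(2,3)] by simp
  then show ?thesis
    using k(2) by (rule uniform_limit_theorem) simp
qed

lemma R_alg_add:
  assumes "h1 \<in> R_alg f g D" "h2 \<in> R_alg f g D"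
  shows "(\<lambda>z. h1 z + h2 z) \<in> R_alg f g D"
proof -
  obtain k1 where "\<And>n. k1 n \<in> rat_fun2 f g D" "uniform_limit D k1 h1 sequentially"
    using assms(1) R_alg_iff_uniform_limit by blast
  moreover obtain k2 where "\<And>n. k2 n \<in> rat_fun2 f g D" "uniform_limit D k2 h2 sequentially"
    using assms(2) R_alg_iff_uniform_limit by blast
  ultimately show ?thesis
    unfolding R_alg_iff_uniform_limit
    by (intro exI[of _ "\<lambda>n z. k1 n z + k2 n z"]) (simp add: rat_fun2_add uniform_limit_add)
qed

lemma R_alg_mult:
  assumes "h1 \<in> R_alg f g D" "h2 \<in> R_alg f g D"
    and "compact D" "continuous_on D f" "continuous_on D g"
  shows "(\<lambda>z. h1 z * h2 z) \<in> R_alg f g D"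
proof -
  have bounded: "bounded (h ` D)" if "h \<in> R_alg f g D" for h
    using compact_continuous_image[OF continuous_on_R_alg[OF that assms(4,5)] assms(3)]
    by (rule compact_imp_bounded)
  obtain k1 where "\<And>n. k1 n \<in> rat_fun2 f g D" "uniform_limit D k1 h1 sequentially"
    using assms(1) R_alg_iff_uniform_limit by blast
  moreover obtain k2 where "\<And>n. k2 n \<in> rat_fun2 f g D" "uniform_limit D k2 h2 sequentially"
    using assms(2) R_alg_iff_uniform_limit by blast
  ultimately show ?thesis
    unfolding R_alg_iff_uniform_limit using bounded assms(1,2)
    by (intro exI[of _ "\<lambda>n z. k1 n z * k2 n z"]) (simp add: rat_fun2_mult uniform_lim_mult)
qed

lemma R_alg_real_polynomial_function:
  fixes u :: "complex \<Rightarrow> 'a::real_normed_vector"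
  assumes "real_polynomial_function p"
    and "\<And>l. bounded_linear l \<Longrightarrow> (\<lambda>z. complex_of_real (l (u z))) \<in> R_alg f g D"
    and "compact D" "continuous_on D f" "continuous_on D g"
  shows "(\<lambda>z. complex_of_real (p (u z))) \<in> R_alg f g D"
  using assms(1)
proof (induction p rule: real_polynomial_function.induct)
  case (linear l)
  then show ?case by (rule assms(2))
next
  case (const c)
  then show ?case by (rule R_alg_const)
next
  case (add p1 p2)
  then show ?case by (simp add: R_alg_add)
next
  case (mult p1 p2)
  then show ?case by (simp add: R_alg_mult assms(3-5))
qed

lemma cutoff_inverse_square_approx:
  fixes t \<delta> Q :: real
  assumes t: "0 \<le> t" "t \<le> 1" and "0 < \<delta>" and Q: "\<bar>1 / max (t\<^sup>2) (\<delta>\<^sup>2) - Q\<bar> < \<delta>"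
  shows "t * \<bar>1 - t\<^sup>2 * Q\<bar> < 2 * \<delta>"
proof -
  define \<psi> where "\<psi> = 1 / max (t\<^sup>2) (\<delta>\<^sup>2)"
  have cutoff: "t * \<bar>1 - t\<^sup>2 * \<psi>\<bar> \<le> \<delta>"
  proof (cases "\<delta> \<le> t")
    case True
    then have "\<delta>\<^sup>2 \<le> t\<^sup>2" "t > 0"
      using \<open>0 < \<delta>\<close> by (simp_all add: power_mono)
    then have "t\<^sup>2 * \<psi> = 1"
      by (simp add: \<psi>_def max_def)
    then show ?thesis using \<open>0 < \<delta>\<close> by simp
  next
    case False
    then have "t\<^sup>2 \<le> \<delta>\<^sup>2"
      using t by (simp add: power_mono)
    then have "t\<^sup>2 * \<psi> = t\<^sup>2 / \<delta>\<^sup>2"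
      by (simp add: \<psi>_def max_def)
    moreover have "t\<^sup>2 / \<delta>\<^sup>2 \<le> 1"
      using \<open>t\<^sup>2 \<le> \<delta>\<^sup>2\<close> \<open>0 < \<delta>\<close> by simp
    ultimately have "\<bar>1 - t\<^sup>2 * \<psi>\<bar> \<le> 1"
      by simp
    then have "t * \<bar>1 - t\<^sup>2 * \<psi>\<bar> \<le> t"
      using t(1) by (rule mult_left_le)
    then show ?thesis using False by linarith
  qed
  have "1 - t\<^sup>2 * Q = (1 - t\<^sup>2 * \<psi>) + t\<^sup>2 * (\<psi> - Q)"
    by (simp add: algebra_simps)
  then have split: "\<bar>1 - t\<^sup>2 * Q\<bar> \<le> \<bar>1 - t\<^sup>2 * \<psi>\<bar> + t\<^sup>2 * \<bar>\<psi> - Q\<bar>"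
    using abs_triangle_ineq[of "1 - t\<^sup>2 * \<psi>" "t\<^sup>2 * (\<psi> - Q)"] by (simp add: abs_mult)
  have "t * \<bar>1 - t\<^sup>2 * Q\<bar> \<le> t * \<bar>1 - t\<^sup>2 * \<psi>\<bar> + (t * t\<^sup>2) * \<bar>\<psi> - Q\<bar>"
    using mult_left_mono[OF split t(1)] by (simp add: distrib_left mult.assoc)
  moreover have "t * t\<^sup>2 \<le> 1"
    using t by (intro mult_le_one) (simp_all add: power_le_one)
  then have "(t * t\<^sup>2) * \<bar>\<psi> - Q\<bar> \<le> \<bar>\<psi> - Q\<bar>"
    using t(1) by (intro mult_left_le_one_le) simp_all
  ultimately show ?thesis
    using cutoff Q unfolding \<psi>_def by linarith
qed

context
  fixes f g :: "complex \<Rightarrow> complex" and D :: "complex set"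
  assumes compact_D: "compact D" and D_unit: "D \<subseteq> cball 0 1"
    and cont_f: "continuous_on D f" and cont_g: "continuous_on D g"
    and square_in: "(\<lambda>z. z ^ 2) \<in> R_alg f g D" and cnj_in: "cnj \<in> R_alg f g D"
begin

lemma norm_power4_in_R_alg: "(\<lambda>z. complex_of_real (cmod z ^ 4)) \<in> R_alg f g D"
proof -
  have "complex_of_real (cmod z ^ 4) = z ^ 2 * (cnj z * cnj z)" for z
  proof -
    have "complex_of_real (cmod z ^ 4) = (complex_of_real ((cmod z)\<^sup>2))\<^sup>2"
      by (simp flip: power_mult)
    also have "\<dots> = z ^ 2 * (cnj z * cnj z)"
      by (simp only: complex_norm_square) (simp add: power2_eq_square mult_ac)
    finally show ?thesis .
  qed
  then show ?thesis
    using square_in cnj_in by (simp add: R_alg_mult compact_D cont_f cont_g)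
qed

lemma identity_in_R_alg: "(\<lambda>z. z) \<in> R_alg f g D"
proof (rule R_alg_uniformly_closed)
  fix e :: real assume "e > 0"
  define \<delta> where "\<delta> = e / 2"
  define \<psi> where "\<psi> = (\<lambda>x::real. 1 / max (sqrt x) (\<delta>\<^sup>2))"
  have "\<delta> > 0" using \<open>e > 0\<close> by (simp add: \<delta>_def)
  then have "continuous_on {0..1} \<psi>"
    unfolding \<psi>_def by (intro continuous_intros) (auto simp: max_def)
  then obtain q where q: "real_polynomial_function q" "\<And>x. x \<in> {0..1} \<Longrightarrow> \<bar>\<psi> x - q x\<bar> < \<delta>"
    using Stone_Weierstrass_real_polynomial_function[OF compact_Icc _ \<open>\<delta> > 0\<close>] by blast
  have "(\<lambda>z. complex_of_real (l (cmod z ^ 4))) \<in> R_alg f g D" if "bounded_linear l" for l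
  proof -
    have "l (cmod z ^ 4) = cmod z ^ 4 * l 1" for z
      using linear_scale_real[OF bounded_linear.linear[OF that], of "cmod z ^ 4" 1] by simp
    then show ?thesis
      using norm_power4_in_R_alg by (simp add: R_alg_mult R_alg_const compact_D cont_f cont_g)
  qed
  then have "(\<lambda>z. complex_of_real (q (cmod z ^ 4))) \<in> R_alg f g D"
    by (rule R_alg_real_polynomial_function[OF q(1) _ compact_D cont_f cont_g])
  define F where "F = (\<lambda>z. z ^ 2 * cnj z * complex_of_real (q (cmod z ^ 4)))"
  then have "F \<in> R_alg f g D"
    using square_in cnj_in \<open>(\<lambda>z. complex_of_real (q (cmod z ^ 4))) \<in> R_alg f g D\<close>
    by (simp add: R_alg_mult compact_D cont_f cont_g)
  moreover have "norm (z - F z) < e" if "z \<in> D" for z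
  proof -
    define t where "t = cmod z"
    have t: "0 \<le> t" "t \<le> 1" using that D_unit by (auto simp: t_def)
    have "sqrt (t ^ 4) = t\<^sup>2"
      by (rule real_sqrt_unique) simp_all
    then have "\<bar>1 / max (t\<^sup>2) (\<delta>\<^sup>2) - q (t ^ 4)\<bar> < \<delta>"
      using q(2)[of "t ^ 4"] t by (simp add: \<psi>_def power_le_one)
    then have "t * \<bar>1 - t\<^sup>2 * q (t ^ 4)\<bar> < e"
      using cutoff_inverse_square_approx[OF t \<open>\<delta> > 0\<close>] by (simp add: \<delta>_def)
    moreover have "z - z ^ 2 * cnj z * complex_of_real (q (t ^ 4))
        = z * complex_of_real (1 - t\<^sup>2 * q (t ^ 4))"
      using complex_norm_square[of z] by (simp add: t_def power2_eq_square algebra_simps)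
    ultimately show ?thesis
      by (simp only: F_def t_def[symmetric] norm_mult norm_of_real)
  qed
  ultimately show "\<exists>F\<in>R_alg f g D. \<forall>z\<in>D. norm (z - F z) < e"
    by blast
qed

lemma bounded_linear_in_R_alg:
  fixes l :: "complex \<Rightarrow> real"
  assumes "bounded_linear l"
  shows "(\<lambda>z. complex_of_real (l z)) \<in> R_alg f g D"
proof -
  have lin: "linear l" using assms by (rule bounded_linear.linear)
  define a where "a = (l 1 - \<i> * l \<i>) / 2"
  define b where "b = (l 1 + \<i> * l \<i>) / 2"
  have "complex_of_real (l z) = z * a + cnj z * b" for z
  proof -
    have "z = Re z *\<^sub>R 1 + Im z *\<^sub>R \<i>" by (simp add: complex_eq_iff)
    then have "l z = l (Re z *\<^sub>R 1 + Im z *\<^sub>R \<i>)" by (rule arg_cong)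
    then have "l z = Re z * l 1 + Im z * l \<i>" by (simp add: linear_add[OF lin] linear_scale[OF lin])
    then show ?thesis by (simp add: a_def b_def complex_eq_iff field_simps)
  qed
  then show ?thesis
    using identity_in_R_alg cnj_in by (simp add: R_alg_add R_alg_mult R_alg_const compact_D cont_f cont_g)
qed

lemma polynomial_function_in_R_alg:
  fixes p :: "complex \<Rightarrow> complex"
  assumes "polynomial_function p"
  shows "p \<in> R_alg f g D"
proof -
  have "(\<lambda>z. complex_of_real ((L \<circ> p) z)) \<in> R_alg f g D" if "bounded_linear L" for L
  proof -
    have "real_polynomial_function (L \<circ> p)"
      using assms that unfolding polynomial_function_def by blast
    then show ?thesis
      by (rule R_alg_real_polynomial_function[where u="\<lambda>z. z",
            OF _ bounded_linear_in_R_alg compact_D cont_f cont_g])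
  qed
  from this[OF bounded_linear_Re] this[OF bounded_linear_Im]
  have "(\<lambda>z. complex_of_real (Re (p z)) + complex_of_real (Im (p z)) * \<i>) \<in> R_alg f g D"
    by (simp add: o_def R_alg_add R_alg_mult R_alg_const compact_D cont_f cont_g)
  moreover have "(\<lambda>z. complex_of_real (Re (p z)) + complex_of_real (Im (p z)) * \<i>) = p"
    by (simp add: fun_eq_iff complex_eq_iff)
  ultimately show ?thesis by simp
qed

theorem R_alg_eq_C_alg: "R_alg f g D = C_alg D"
proof (intro set_eqI iffI)
  fix h assume "h \<in> R_alg f g D"
  then show "h \<in> C_alg D"
    using continuous_on_R_alg[OF _ cont_f cont_g] by (simp add: C_alg_def)
next
  fix h assume "h \<in> C_alg D"
  then have "continuous_on D h" by (simp add: C_alg_def)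
  show "h \<in> R_alg f g D"
  proof (rule R_alg_uniformly_closed)
    fix e :: real assume "e > 0"
    then obtain p where "polynomial_function p" "\<forall>z\<in>D. norm (h z - p z) < e"
      using Stone_Weierstrass_polynomial_function[OF compact_D \<open>continuous_on D h\<close>] by blast
    then show "\<exists>F\<in>R_alg f g D. \<forall>z\<in>D. norm (h z - F z) < e"
      using polynomial_function_in_R_alg by blast
  qed
qed

end

theorem theorem1p1:
  shows "\<exists>r0>0. \<forall>r. 0 < r \<and> r \<le> r0 \<longrightarrow>
     R_alg (\<lambda>z. z ^ 2) (\<lambda>z. cnj z / (1 + cnj z)) (cball 0 r) = C_alg (cball 0 r)"
proof (intro exI[of _ "1/2"] conjI allI impI)
  fix r :: real assume r: "0 < r \<and> r \<le> 1/2"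
  let ?f = "\<lambda>z::complex. z ^ 2" and ?g = "\<lambda>z. cnj z / (1 + cnj z)"
  have nonzero: "1 + cnj z \<noteq> 0" if "z \<in> cball 0 r" for z
  proof
    assume "1 + cnj z = 0"
    then have "cmod (cnj z) = 1" by (simp add: add_eq_0_iff)
    then show False using that r by simp
  qed
  have "?f \<in> rat_fun2 ?f ?g (cball 0 r)"
    using poly2_monomial[of 1 1 0] by (intro rat_fun2I[where Q="\<lambda>u v. 1"] poly2_const) simp_all
  moreover have "cnj \<in> rat_fun2 ?f ?g (cball 0 r)"
  proof (rule rat_fun2I)
    show "(\<lambda>u v. v) \<in> poly2" using poly2_monomial[of 1 0 1] by simp
    show "(\<lambda>u v. 1 - v) \<in> poly2" using poly2_add[OF poly2_const poly2_monomial[of "-1" 0 1]] by simp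
  qed (use nonzero in \<open>auto simp: field_simps\<close>)
  ultimately show "R_alg ?f ?g (cball 0 r) = C_alg (cball 0 r)"
  proof (intro R_alg_eq_C_alg)
    show "cball 0 r \<subseteq> cball (0::complex) 1" using r by auto
    show "continuous_on (cball 0 r) ?g" using nonzero by (intro continuous_intros) auto
  qed (use rat_fun2_subset_R_alg in \<open>auto intro: continuous_intros\<close>)
qed simp

end
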